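(* Let $n\ge 2$ and $\alpha\in\mathbb{Z}_2^n$. Then $$\max_{\beta,\gamma\in\mathbb{Z}_2^n}\mathrm{adp}^{\mathrm{XR}}_1(\alpha,\beta\to\gamma)=\mathrm{adp}^{\mathrm{XR}}_1(\alpha,\alpha\to 0).$$
   Context: For $x\in\mathbb{Z}_2^n$ write $x=(x_0,\dots,x_{n-1})$ and identify $x$ with the integer $\sum_{i=0}^{n-1}x_i2^{n-1-i}$, so $x_0$ is the most significant bit; $x+y$, $x-y$ and $-x$ are computed modulo $2^n$. $\oplus$ is bitwise XOR and $x\lll r=(x_r,\dots,x_{n-1},x_0,\dots,x_{r-1})$. For $f:(\mathbb{Z}_2^n)^k\to\mathbb{Z}_2^n$ the additive differential probability is $\mathrm{adp}^f(\alpha_1,\dots,\alpha_k\to\alpha_{k+1})=2^{-kn}\#\{(x_1,\dots,x_k)\in(\mathbb{Z}_2^n)^k: f(x_1+\alpha_1,\dots,x_k+\alpha_k)=f(x_1,\dots,x_k)+\alpha_{k+1}\}$. For $1\le r\le n-1$, $\mathrm{adp}^{\mathrm{XR}}_r$ denotes $\mathrm{adp}^f$ for $f(x,y)=(x\oplus y)\lll r$. *)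

theory Defs
  imports Main "HOL.Real"
begin

text \<open>Elements of Z_2^n are identified with naturals in {0..<2^n}: the bit vector
(x_0,...,x_{n-1}) corresponds to sum x_i 2^(n-1-i), so x_0 is the most significant bit.\<close>

definition words :: "nat \<Rightarrow> nat set" where
  "words n = {..<2^n}"

definition addm :: "nat \<Rightarrow> nat \<Rightarrow> nat \<Rightarrow> nat" where
  "addm n x y = (x + y) mod 2^n"

text \<open>Left rotation by r of an n-bit word: (x_0..x_{n-1}) goes to (x_r..x_{n-1},x_0..x_{r-1}).\<close>
definition rotl :: "nat \<Rightarrow> nat \<Rightarrow> nat \<Rightarrow> nat" where
  "rotl n r x = (x * 2^r + x div 2^(n - r)) mod 2^n"

definition adp2 :: "nat \<Rightarrow> (nat \<Rightarrow> nat \<Rightarrow> nat) \<Rightarrow> nat \<Rightarrow> nat \<Rightarrow> nat \<Rightarrow> real" where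
  "adp2 n f a1 a2 a3 =
     real (card {(x, y). x \<in> words n \<and> y \<in> words n \<and>
        f (addm n x a1) (addm n y a2) = addm n (f x y) a3}) / 2 ^ (2 * n)"

definition XR :: "nat \<Rightarrow> nat \<Rightarrow> nat \<Rightarrow> nat \<Rightarrow> nat" where
  "XR n r x y = rotl n r (Bit_Operations.xor x y)"

definition adpXR :: "nat \<Rightarrow> nat \<Rightarrow> nat \<Rightarrow> nat \<Rightarrow> nat \<Rightarrow> real" where
  "adpXR n r a b c = adp2 n (XR n r) a b c"

end

theory Submission
  imports Defs
begin

text \<open>Write n = m + 1 and split x and y into their top bits p, q and their low m bits.
Rotating by one moves bit m to position 0, so the XR condition for (\<alpha>, \<beta> \<rightarrow> \<gamma>) becomes a
condition on the low parts alone: (x + \<alpha>) XOR (y + \<beta>) \<equiv> (x XOR y) + \<delta> mod 2^m, where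
\<delta> = \<gamma> div 2 plus the carry produced by odd \<gamma> and p \<noteq> q, together with a prescribed bit m of
(x + \<alpha>) XOR (y + \<beta>), namely odd \<gamma>. Counting the solutions of such a condition by peeling off
the lowest bit gives a recursion in which the parameters are halved and carries are absorbed
into them; by induction the count never exceeds the one for the diagonal parameters
(\<alpha>, \<alpha>, \<delta> = 0, bit 0), which is exactly what each of the four choices of (p, q) yields for
(\<alpha>, \<alpha> \<rightarrow> 0).\<close>

unbundle bit_operations_syntax

lemma card_pairs_via_bij:
  assumes g: "bij_betw (\<lambda>(i, x). g i x) (I \<times> A) B" and fin: "finite I" "finite A"
    and S: "S \<subseteq> B \<times> B"
  shows "card S = (\<Sum>i\<in>I. \<Sum>j\<in>I. card {(x, y) \<in> A \<times> A. (g i x, g j y) \<in> S})"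
proof -
  let ?F = "\<lambda>(i, j). {(x, y) \<in> A \<times> A. (g i x, g j y) \<in> S}"
  let ?h = "\<lambda>((i, j), (x, y)). (g i x, g j y)"
  have inj: "inj_on ?h (Sigma (I \<times> I) ?F)"
    using bij_betw_imp_inj_on[OF g] by (auto simp: inj_on_def)
  have "S \<subseteq> ?h ` Sigma (I \<times> I) ?F"
  proof
    fix z assume "z \<in> S"
    then obtain u v where z: "z = (u, v)" "u \<in> (\<lambda>(i, x). g i x) ` (I \<times> A)" "v \<in> (\<lambda>(i, x). g i x) ` (I \<times> A)"
      using S bij_betw_imp_surj_on[OF g] by blast
    then obtain i x j y where "i \<in> I" "x \<in> A" "u = g i x" "j \<in> I" "y \<in> A" "v = g j y"
      by auto
    then show "z \<in> ?h ` Sigma (I \<times> I) ?F"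
      using \<open>z \<in> S\<close> z by (auto intro!: image_eqI[where x = "((i, j), (x, y))"])
  qed
  moreover have "?h ` Sigma (I \<times> I) ?F \<subseteq> S"
    by auto
  ultimately have S_eq: "S = ?h ` Sigma (I \<times> I) ?F"
    by (rule equalityI)
  have "card S = card (Sigma (I \<times> I) ?F)"
    using card_image[OF inj, folded S_eq] .
  also have "\<dots> = (\<Sum>(i, j)\<in>I \<times> I. card {(x, y) \<in> A \<times> A. (g i x, g j y) \<in> S})"
    using fin by (subst card_SigmaI) (auto simp: case_prod_unfold intro: finite_subset[of _ "A \<times> A"])
  finally show ?thesis
    by (simp only: sum.cartesian_product)
qed

lemma bij_betw_double_add_bit:
  "bij_betw (\<lambda>(p, x). 2 * x + of_bool p) (UNIV \<times> {..<m}) {..<2 * m :: nat}"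
  by (rule bij_betw_byWitness[where f' = "\<lambda>z. (odd z, z div 2)"]) auto

lemma bij_betw_add_top_bit:
  "bij_betw (\<lambda>(p, x). x + of_bool p * m) (UNIV \<times> {..<m}) {..<2 * m :: nat}"
  by (rule bij_betw_byWitness[where f' = "\<lambda>z. (m \<le> z, if m \<le> z then z - m else z)"]) auto

lemma take_bit_Suc_eq_iff:
  "take_bit (Suc k) z = take_bit (Suc k) w \<longleftrightarrow>
     (even z \<longleftrightarrow> even w) \<and> take_bit k (z div 2) = take_bit k (w div 2)" for z w :: nat
  unfolding take_bit_Suc by presburger

lemma xor_div_2: "(u XOR v) div 2 = u div 2 XOR v div 2" for u v :: nat
  by (subst xor_nat_rec) simp

lemma double_add_bit_xor:
  "(2 * x + of_bool p) XOR (2 * y + of_bool q) = 2 * (x XOR y) + of_bool (p \<noteq> q)" for x y :: nat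
  by (subst xor_nat_rec) simp

lemma double_add_bit_eq_iff:
  "2 * x + of_bool p = 2 * y + of_bool q \<longleftrightarrow> x = y \<and> (p \<longleftrightarrow> q)" for x y :: nat
  by (cases p; cases q) (simp_all, presburger+)

lemma double_add_bit_eq_mod_iff:
  fixes A B g :: nat
  shows "2 * A + of_bool a = (2 * B + of_bool b + g) mod 2 ^ Suc m \<longleftrightarrow>
    (a \<longleftrightarrow> b \<noteq> odd g) \<and> A = (B + g div 2 + of_bool (b \<and> odd g)) mod 2 ^ m"
proof -
  define C where "C = B + g div 2 + of_bool (b \<and> odd g)"
  have "2 * B + of_bool b + g = 2 * C + of_bool (b \<noteq> odd g)"
    unfolding C_def by (cases b) (auto elim: oddE)
  then have mod_eq: "(2 * B + of_bool b + g) mod 2 ^ Suc m = 2 * (C mod 2 ^ m) + of_bool (b \<noteq> odd g)"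
    by (simp add: mod_mult2_eq mult.commute)
  show ?thesis
    unfolding mod_eq C_def[symmetric] double_add_bit_eq_iff by auto
qed

lemma take_bit_add_top:
  "take_bit m (z + of_bool p * 2 ^ m) = take_bit m z" for z :: nat
  by (simp add: take_bit_eq_mod)

lemma bit_add_top:
  "bit (z + of_bool p * 2 ^ m) m \<longleftrightarrow> p \<noteq> bit z m" for z :: nat
proof -
  have "(z + of_bool p * 2 ^ m) div 2 ^ m = of_bool p + z div 2 ^ m"
    by (rule div_mult_self1) simp
  then show ?thesis
    unfolding bit_iff_odd by (cases p) auto
qed

lemma rotl_Suc_1:
  assumes "w < 2 ^ Suc m"
  shows "rotl (Suc m) 1 w = 2 * take_bit m w + of_bool (bit w m)"
proof -
  have "w div 2 ^ m < 2"
    using assms by (simp add: less_mult_imp_div_less)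
  then have top: "w div 2 ^ m = of_bool (bit w m)"
    by (auto simp: bit_iff_odd less_2_cases_iff)
  have "take_bit (Suc m) w = w"
    using assms by (rule take_bit_nat_eq_self)
  then have "w = 2 ^ m * of_bool (bit w m) + take_bit m w"
    using take_bit_Suc_from_most[of m w] by simp
  then have "w * 2 + w div 2 ^ m = (2 * take_bit m w + of_bool (bit w m)) + of_bool (bit w m) * 2 ^ Suc m"
    unfolding top by (simp add: algebra_simps)
  moreover have "2 * take_bit m w + of_bool (bit w m) < 2 ^ Suc m"
  proof -
    have "take_bit m w < 2 ^ m" "of_bool (bit w m) \<le> (1 :: nat)" "2 ^ Suc m = 2 * (2 :: nat) ^ m"
      by simp_all
    then show ?thesis
      by linarith
  qed
  ultimately show ?thesis
    by (simp add: rotl_def)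
qed

text \<open>Bit k of the output is prescribed because the rotation by one moves it to position 0.
The differences a, b, d are not reduced modulo 2^k, so that carries can be absorbed into them.\<close>

definition xor_sols :: "nat \<Rightarrow> nat \<Rightarrow> nat \<Rightarrow> nat \<Rightarrow> bool \<Rightarrow> (nat \<times> nat) set" where
  "xor_sols k a b d f = {(x, y). x < 2 ^ k \<and> y < 2 ^ k \<and>
     take_bit k ((x + a) XOR (y + b)) = take_bit k ((x XOR y) + d) \<and>
     bit ((x + a) XOR (y + b)) k = f}"

lemma mem_xor_sols_Suc:
  "(2 * x + of_bool p, 2 * y + of_bool q) \<in> xor_sols (Suc k) a b d f \<longleftrightarrow>
     even (a + b + d) \<and>
     (x, y) \<in> xor_sols k ((of_bool p + a) div 2) ((of_bool q + b) div 2) ((of_bool (p \<noteq> q) + d) div 2) f"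
proof -
  let ?u = "2 * x + of_bool p" and ?v = "2 * y + of_bool q"
  have half: "(2 * z + of_bool r + c) div 2 = z + (of_bool r + c) div 2" for z c :: nat and r
    by simp
  have lt: "2 * z + of_bool r < 2 ^ Suc k \<longleftrightarrow> z < 2 ^ k" for z :: nat and r
    by (cases r) auto
  have lhs: "((?u + a) XOR (?v + b)) div 2 = (x + (of_bool p + a) div 2) XOR (y + (of_bool q + b) div 2)"
    by (simp only: xor_div_2 half)
  have rhs: "((?u XOR ?v) + d) div 2 = (x XOR y) + (of_bool (p \<noteq> q) + d) div 2"
    by (simp only: double_add_bit_xor half)
  have parity: "(even ((?u + a) XOR (?v + b)) \<longleftrightarrow> even ((?u XOR ?v) + d)) \<longleftrightarrow> even (a + b + d)"
    by (cases p; cases q) (auto simp: even_xor_iff double_add_bit_xor)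
  show ?thesis
    unfolding xor_sols_def mem_Collect_eq prod.case take_bit_Suc_eq_iff bit_Suc lt lhs rhs parity
    by blast
qed

lemma card_xor_sols_0: "card (xor_sols 0 a b d f) = of_bool ((odd a \<noteq> odd b) \<longleftrightarrow> f)"
proof -
  have "xor_sols 0 a b d f = (if (odd a \<noteq> odd b) \<longleftrightarrow> f then {(0, 0)} else {})"
    by (auto simp: xor_sols_def bit_0 even_xor_iff)
  then show ?thesis
    by simp
qed

lemma card_xor_sols_Suc:
  "card (xor_sols (Suc k) a b d f) = (if even (a + b + d) then
     (\<Sum>p\<in>UNIV. \<Sum>q\<in>UNIV. card (xor_sols k ((of_bool p + a) div 2) ((of_bool q + b) div 2)
                                              ((of_bool (p \<noteq> q) + d) div 2) f))
   else 0)"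
proof -
  have sub: "xor_sols (Suc k) a b d f \<subseteq> {..<2 * 2 ^ k} \<times> {..<2 * 2 ^ k}"
    by (auto simp: xor_sols_def)
  have "{(x, y) \<in> {..<2 ^ k} \<times> {..<2 ^ k}. (2 * x + of_bool p, 2 * y + of_bool q) \<in> xor_sols (Suc k) a b d f}
      = (if even (a + b + d) then xor_sols k ((of_bool p + a) div 2) ((of_bool q + b) div 2)
                                              ((of_bool (p \<noteq> q) + d) div 2) f else {})" for p q
    unfolding mem_xor_sols_Suc by (auto simp: xor_sols_def)
  then show ?thesis
    using card_pairs_via_bij[OF bij_betw_double_add_bit _ _ sub] by simp
qed

lemma card_xor_sols_Suc_odd: "odd (a + b + d) \<Longrightarrow> card (xor_sols (Suc k) a b d f) = 0"
  by (simp add: card_xor_sols_Suc)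

lemma card_xor_sols_odd_diff:
  "odd (a + b) \<Longrightarrow> card (xor_sols k a b 0 False) = 0"
  by (cases k) (simp_all add: card_xor_sols_0 card_xor_sols_Suc)

lemma card_xor_sols_diag_Suc:
  "card (xor_sols (Suc k) a a 0 False) =
   (if even a then 4 * card (xor_sols k (a div 2) (a div 2) 0 False)
    else card (xor_sols k (a div 2) (a div 2) 0 False)
       + card (xor_sols k (Suc (a div 2)) (Suc (a div 2)) 0 False))"
  using card_xor_sols_odd_diff[of "a div 2" "Suc (a div 2)" k]
    card_xor_sols_odd_diff[of "Suc (a div 2)" "a div 2" k]
  by (auto simp: card_xor_sols_Suc UNIV_bool)

lemma card_xor_sols_le_diag:
  "card (xor_sols k a b d f) \<le> card (xor_sols k a a 0 False)"
proof (induction k arbitrary: a b d)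
  case 0
  then show ?case
    by (simp add: card_xor_sols_0)
next
  case (Suc k)
  define T where "T p q = card (xor_sols k ((of_bool p + a) div 2) ((of_bool q + b) div 2)
                                           ((of_bool (p \<noteq> q) + d) div 2) f)" for p q
  let ?D = "\<lambda>a. card (xor_sols k a a 0 False)"
  show ?case
  proof (cases "even (a + b + d)")
    case False
    then show ?thesis
      by (simp add: card_xor_sols_Suc)
  next
    case parity: True
    then have sum: "card (xor_sols (Suc k) a b d f) = T False False + T False True + T True False + T True True"
      by (simp add: card_xor_sols_Suc T_def UNIV_bool)
    have T_le: "T p q \<le> ?D ((of_bool p + a) div 2)" for p q
      unfolding T_def by (rule Suc.IH)
    show ?thesis
    proof (cases "even a")
      case True
      then show ?thesis
        using T_le[of False False] T_le[of False True] T_le[of True False] T_le[of True True]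
        by (simp add: sum card_xor_sols_diag_Suc)
    next
      case odd: False
      txt \<open>For k > 0 the parity condition
        of the next level kills one summand of each pair T p False, T p True; for k = 0 the
        prescribed output bit kills one summand of each pair T False q, T True q.\<close>
      have odd_split: "odd (c + b0 + d0) \<or> odd (c + b1 + d1)" if "b0 + b1 = b" "d0 + d1 = d" for c b0 b1 d0 d1 :: nat
        using that odd parity by presburger
      have D_Suc: "card (xor_sols (Suc k) a a 0 False) = ?D (a div 2) + ?D (Suc (a div 2))"
        using odd by (simp add: card_xor_sols_diag_Suc)
      show ?thesis
      proof (cases k)
        case 0
        have "T False q + T True q \<le> 1" for q
          using odd by (auto simp: T_def 0 card_xor_sols_0)
        from this[of False] this[of True] show ?thesis
          using sum D_Suc by (simp add: 0 card_xor_sols_0)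
      next
        case (Suc j)
        have one_vanishes: "T p False = 0 \<or> T p True = 0" for p
        proof -
          have "(of_bool False + b) div 2 + (of_bool True + b) div 2 = b"
            by simp
          moreover have "(of_bool (p \<noteq> False) + d) div 2 + (of_bool (p \<noteq> True) + d) div 2 = d"
            by (cases p) simp_all
          ultimately have "odd ((of_bool p + a) div 2 + (of_bool False + b) div 2 + (of_bool (p \<noteq> False) + d) div 2)
              \<or> odd ((of_bool p + a) div 2 + (of_bool True + b) div 2 + (of_bool (p \<noteq> True) + d) div 2)"
            by (rule odd_split)
          then show ?thesis
            unfolding T_def Suc by (metis card_xor_sols_Suc_odd)
        qed
        have "T p False + T p True \<le> ?D ((of_bool p + a) div 2)" for p
          using one_vanishes[of p] T_le[of p False] T_le[of p True] by auto
        from this[of False] this[of True] show ?thesis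
          using sum D_Suc odd by simp
      qed
    qed
  qed
qed

lemma XR_1_eq_iff:
  fixes p q :: bool
  assumes x: "x < 2 ^ m" and y: "y < 2 ^ m"
  defines "x' \<equiv> x + of_bool p * 2 ^ m" and "y' \<equiv> y + of_bool q * 2 ^ m"
  shows "XR (Suc m) 1 (addm (Suc m) x' \<alpha>) (addm (Suc m) y' \<beta>) = addm (Suc m) (XR (Suc m) 1 x' y') \<gamma> \<longleftrightarrow>
    (x, y) \<in> xor_sols m \<alpha> \<beta> (\<gamma> div 2 + of_bool (odd \<gamma> \<and> p \<noteq> q)) (odd \<gamma>)"
proof -
  define W where "W = addm (Suc m) x' \<alpha> XOR addm (Suc m) y' \<beta>"
  have shift: "x' + \<alpha> = (x + \<alpha>) + of_bool p * 2 ^ m" "y' + \<beta> = (y + \<beta>) + of_bool q * 2 ^ m"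
    by (simp_all add: x'_def y'_def)
  have W_eq: "W = take_bit (Suc m) ((x' + \<alpha>) XOR (y' + \<beta>))"
    by (simp only: W_def addm_def take_bit_eq_mod[symmetric] take_bit_xor)
  have low_W: "take_bit m W = take_bit m ((x + \<alpha>) XOR (y + \<beta>))"
    unfolding W_eq shift by (simp add: take_bit_add_top[of m])
  have top_W: "bit W m \<longleftrightarrow> (p \<noteq> q) \<noteq> bit ((x + \<alpha>) XOR (y + \<beta>)) m"
    unfolding W_eq shift by (auto simp: bit_take_bit_iff bit_xor_iff bit_add_top)
  have x_low: "take_bit m x = x" "\<not> bit x m" and y_low: "take_bit m y = y" "\<not> bit y m"
    using x y by (simp_all add: take_bit_nat_eq_self bit_iff_odd)
  have low_U: "take_bit m (x' XOR y') = x XOR y"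
    unfolding x'_def y'_def by (simp add: take_bit_add_top[of m] x_low y_low)
  have top_U: "bit (x' XOR y') m \<longleftrightarrow> p \<noteq> q"
    unfolding x'_def y'_def by (auto simp: bit_xor_iff bit_add_top x_low y_low)
  have "W < 2 ^ Suc m"
    unfolding W_eq by (rule take_bit_nat_less_exp)
  then have lhs: "XR (Suc m) 1 (addm (Suc m) x' \<alpha>) (addm (Suc m) y' \<beta>) = 2 * take_bit m W + of_bool (bit W m)"
    unfolding XR_def W_def[symmetric] by (rule rotl_Suc_1)
  have "x' < 2 ^ Suc m" "y' < 2 ^ Suc m"
    using x y by (simp_all add: x'_def y'_def of_bool_def)
  then have "x' XOR y' < 2 ^ Suc m"
    by (metis take_bit_nat_eq_self_iff take_bit_xor)
  then have rhs: "addm (Suc m) (XR (Suc m) 1 x' y') \<gamma> = (2 * (x XOR y) + of_bool (p \<noteq> q) + \<gamma>) mod 2 ^ Suc m"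
    unfolding XR_def addm_def by (simp only: rotl_Suc_1 low_U top_U)
  show ?thesis
    unfolding lhs rhs double_add_bit_eq_mod_iff low_W top_W
    by (auto simp: xor_sols_def x y take_bit_eq_mod)
qed

lemma card_XR_1_sols:
  "card {(x, y). x \<in> words (Suc m) \<and> y \<in> words (Suc m) \<and>
      XR (Suc m) 1 (addm (Suc m) x \<alpha>) (addm (Suc m) y \<beta>) = addm (Suc m) (XR (Suc m) 1 x y) \<gamma>}
   = (\<Sum>p\<in>UNIV. \<Sum>q\<in>UNIV. card (xor_sols m \<alpha> \<beta> (\<gamma> div 2 + of_bool (odd \<gamma> \<and> p \<noteq> (q :: bool))) (odd \<gamma>)))"
  (is "card ?S = _")
proof -
  have sub: "?S \<subseteq> {..<2 * 2 ^ m} \<times> {..<2 * 2 ^ m}"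
    by (auto simp: words_def)
  have "{(x, y) \<in> {..<2 ^ m} \<times> {..<2 ^ m}. (x + of_bool p * 2 ^ m, y + of_bool q * 2 ^ m) \<in> ?S}
      = xor_sols m \<alpha> \<beta> (\<gamma> div 2 + of_bool (odd \<gamma> \<and> p \<noteq> q)) (odd \<gamma>)" for p q
    using XR_1_eq_iff[where p = p and q = q] by (auto simp: words_def xor_sols_def of_bool_def)
  then show ?thesis
    using card_pairs_via_bij[OF bij_betw_add_top_bit _ _ sub] by simp
qed

lemma adpXR_1_le_diag:
  assumes "n \<ge> 1"
  shows "adpXR n 1 \<alpha> \<beta> \<gamma> \<le> adpXR n 1 \<alpha> \<alpha> 0"
proof -
  obtain m where n: "n = Suc m"
    using assms by (cases n) auto
  let ?sols = "\<lambda>\<beta> \<gamma>. {(x, y). x \<in> words n \<and> y \<in> words n \<and>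
                  XR n 1 (addm n x \<alpha>) (addm n y \<beta>) = addm n (XR n 1 x y) \<gamma>}"
  have "card (?sols \<beta> \<gamma>) \<le> card (?sols \<alpha> 0)"
    unfolding n card_XR_1_sols by (intro sum_mono) (simp add: card_xor_sols_le_diag)
  then show ?thesis
    unfolding adpXR_def adp2_def by (intro divide_right_mono) simp_all
qed

theorem theorem6:
  fixes n \<alpha> :: nat
  assumes "n \<ge> 2" and "\<alpha> \<in> words n"
  shows "Max ((\<lambda>(\<beta>, \<gamma>). adpXR n 1 \<alpha> \<beta> \<gamma>) ` (words n \<times> words n))
         = adpXR n 1 \<alpha> \<alpha> 0"
proof (rule Max_eqI)
  show "finite ((\<lambda>(\<beta>, \<gamma>). adpXR n 1 \<alpha> \<beta> \<gamma>) ` (words n \<times> words n))"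
    by (simp add: words_def)
  show "r \<le> adpXR n 1 \<alpha> \<alpha> 0" if "r \<in> (\<lambda>(\<beta>, \<gamma>). adpXR n 1 \<alpha> \<beta> \<gamma>) ` (words n \<times> words n)" for r
    using that adpXR_1_le_diag[of n] \<open>n \<ge> 2\<close> by auto
  have "(\<alpha>, 0) \<in> words n \<times> words n"
    using \<open>\<alpha> \<in> words n\<close> by (simp add: words_def)
  then show "adpXR n 1 \<alpha> \<alpha> 0 \<in> (\<lambda>(\<beta>, \<gamma>). adpXR n 1 \<alpha> \<beta> \<gamma>) ` (words n \<times> words n)"
    by force
qed

end
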